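(* Let $\mathcal F=(F_n)_{n\in\mathbb N}$ be an indexed family. If there are $A,B\in\mathcal F$ with $A\neq B$ and $A\cap B\neq\emptyset$, then $\mathcal F$ is not PRT-learnable.
   Context: An indexed family is a sequence $\mathcal F=(F_n)_{n\in\mathbb N}$ of subsets of $\mathbb N$ that is uniformly computably enumerable (the set $\{\langle a,i\rangle : a\in F_i\}$ is c.e.); a set may occur with several indices, and $F\in\mathcal F$ means $F=F_n$ for some $n$. The minimal index $\mathrm{mi}_{\mathcal F}(F)$ is the least $n$ with $F_n=F$. An enumeration of a nonempty set $A$ is an infinite sequence of elements of $A$ in which every element of $A$ occurs; $f\restriction n$ denotes the initial segment of length $n$. A learner is a partial computable function from finite strings of natural numbers to natural numbers (hypotheses); hypothesis $h$ is interpreted as $F_h$. $M$ converges to a correct index on an enumeration $f$ of $F$ if there is $i$ with $M(f\restriction j)=M(f\restriction i)$ for all $j\ge i$ and $F_{M(f\restriction i)}=F$. $\mathcal F$ is PRT-learnable if there are a learner $M$ and a polynomial $p$ such that for every $F\in\mathcal F$ and every enumeration $f$ of $F$, $M$ converges to a correct index on $f$ in fewer than $p(\mathrm{mi}_{\mathcal F}(F))$ computation steps. *)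

theory Defs
  imports "HOL-Library.Nat_Bijection" "HOL-Computational_Algebra.Polynomial"
begin

datatype instr =
    Inc nat nat
  | Dec nat nat nat

type_synonym config = "nat \<times> (nat \<Rightarrow> nat)"

definition rm_step :: "instr list \<Rightarrow> config \<Rightarrow> config" where
  "rm_step P c = (let (pc, R) = c in
     if pc < length P then
       (case P ! pc of
          Inc r k \<Rightarrow> (k, R(r := Suc (R r)))
        | Dec r k1 k2 \<Rightarrow> (if R r = 0 then (k2, R) else (k1, R(r := R r - 1))))
     else c)"

definition rm_init :: "nat \<Rightarrow> config" where
  "rm_init x = (0, (\<lambda>r. if r = 0 then x else 0))"

definition rm_run :: "instr list \<Rightarrow> nat \<Rightarrow> nat \<Rightarrow> config" where
  "rm_run P x n = (rm_step P ^^ n) (rm_init x)"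

definition rm_halted :: "instr list \<Rightarrow> nat \<Rightarrow> nat \<Rightarrow> bool" where
  "rm_halted P x n \<longleftrightarrow> length P \<le> fst (rm_run P x n)"

definition rm_halts :: "instr list \<Rightarrow> nat \<Rightarrow> bool" where
  "rm_halts P x \<longleftrightarrow> (\<exists>n. rm_halted P x n)"

text \<open>Number of computation steps: executed instructions plus one final halting step.\<close>
definition rm_time :: "instr list \<Rightarrow> nat \<Rightarrow> nat" where
  "rm_time P x = Suc (LEAST n. rm_halted P x n)"

text \<open>Output: content of register 0 on halting (meaningful only if rm_halts P x).\<close>
definition rm_out :: "instr list \<Rightarrow> nat \<Rightarrow> nat" where
  "rm_out P x = snd (rm_run P x (LEAST n. rm_halted P x n)) 0"

definition ce :: "nat set \<Rightarrow> bool" where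
  "ce S \<longleftrightarrow> (\<exists>P. \<forall>x. x \<in> S \<longleftrightarrow> rm_halts P x)"

definition indexed_family :: "(nat \<Rightarrow> nat set) \<Rightarrow> bool" where
  "indexed_family F \<longleftrightarrow> ce {prod_encode (a, i) | a i. a \<in> F i}"

definition in_family :: "nat set \<Rightarrow> (nat \<Rightarrow> nat set) \<Rightarrow> bool" where
  "in_family A F \<longleftrightarrow> (\<exists>n. F n = A)"

definition min_index :: "(nat \<Rightarrow> nat set) \<Rightarrow> nat set \<Rightarrow> nat" where
  "min_index F A = (LEAST n. F n = A)"

definition enumeration :: "(nat \<Rightarrow> nat) \<Rightarrow> nat set \<Rightarrow> bool" where
  "enumeration f A \<longleftrightarrow> A \<noteq> {} \<and> range f = A"

definition init_seg :: "(nat \<Rightarrow> nat) \<Rightarrow> nat \<Rightarrow> nat list" where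
  "init_seg f n = map f [0..<n]"

definition learner_defined :: "instr list \<Rightarrow> nat list \<Rightarrow> bool" where
  "learner_defined M s \<longleftrightarrow> rm_halts M (list_encode s)"

definition learner_out :: "instr list \<Rightarrow> nat list \<Rightarrow> nat" where
  "learner_out M s = rm_out M (list_encode s)"

definition learner_time :: "instr list \<Rightarrow> nat list \<Rightarrow> nat" where
  "learner_time M s = rm_time M (list_encode s)"

definition converges_within :: "(nat \<Rightarrow> nat set) \<Rightarrow> instr list \<Rightarrow> (nat \<Rightarrow> nat) \<Rightarrow> nat set \<Rightarrow> nat \<Rightarrow> bool" where
  "converges_within F M f A b \<longleftrightarrow>
     (\<exists>i. (\<forall>j\<le>i. learner_defined M (init_seg f j))
        \<and> (\<forall>j\<ge>i. learner_defined M (init_seg f j)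
                  \<and> learner_out M (init_seg f j) = learner_out M (init_seg f i))
        \<and> F (learner_out M (init_seg f i)) = A
        \<and> (\<Sum>j\<le>i. learner_time M (init_seg f j)) < b)"

definition PRT_learnable :: "(nat \<Rightarrow> nat set) \<Rightarrow> bool" where
  "PRT_learnable F \<longleftrightarrow>
     (\<exists>M (p :: nat poly). \<forall>A. in_family A F \<longrightarrow>
        (\<forall>f. enumeration f A \<longrightarrow> converges_within F M f A (poly p (min_index F A))))"

end

theory Submission
  imports Defs
begin

text \<open>Every run of the learner costs at least one step, so a learner that converges within fewer
  than \<open>b\<close> steps has fixed its final hypothesis before reading the \<open>b\<close>-th datum. Enumerations of
  \<open>A\<close> and of \<open>B\<close> that both begin with a long constant block of a common element \<open>x\<close> are
  indistinguishable up to that point, so they receive the same final hypothesis, which cannot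
  name both sets.\<close>

lemma learner_time_pos: "0 < learner_time M s"
  by (simp add: learner_time_def rm_time_def)

lemma converges_within_correct_from:
  assumes "converges_within F M f C b" and "b \<le> N"
  shows "F (learner_out M (init_seg f N)) = C"
proof -
  obtain i where stable: "\<forall>j\<ge>i. learner_defined M (init_seg f j)
                  \<and> learner_out M (init_seg f j) = learner_out M (init_seg f i)"
    and correct: "F (learner_out M (init_seg f i)) = C"
    and time: "(\<Sum>j\<le>i. learner_time M (init_seg f j)) < b"
    using assms(1) unfolding converges_within_def by blast
  have "card {..i} \<le> (\<Sum>j\<le>i. learner_time M (init_seg f j))"
    using sum_mono[of "{..i}" "\<lambda>_. 1::nat"] learner_time_pos by (simp add: Suc_leI)
  with time assms(2) have "i \<le> N" by simp
  with stable correct show ?thesis by metis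
qed

lemma converges_within_common_prefix:
  assumes "converges_within F M f C b" and "converges_within F M g D b'"
    and "init_seg f N = init_seg g N" and "b \<le> N" and "b' \<le> N"
  shows "C = D"
  using converges_within_correct_from[OF assms(1,4)] converges_within_correct_from[OF assms(2,5)]
    assms(3) by simp

definition padded_enumeration :: "nat \<Rightarrow> nat \<Rightarrow> nat set \<Rightarrow> nat \<Rightarrow> nat" where
  "padded_enumeration x N C n = (if N \<le> n \<and> n - N \<in> C then n - N else x)"

lemma enumeration_padded_enumeration:
  assumes "x \<in> C"
  shows "enumeration (padded_enumeration x N C) C"
proof -
  have "range (padded_enumeration x N C) \<subseteq> C"
    using assms by (auto simp: padded_enumeration_def)
  moreover have "a \<in> range (padded_enumeration x N C)" if "a \<in> C" for a
    using that rangeI[of "padded_enumeration x N C" "a + N"] by (simp add: padded_enumeration_def)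
  ultimately show ?thesis
    using assms unfolding enumeration_def by blast
qed

lemma init_seg_padded_enumeration: "init_seg (padded_enumeration x N C) N = replicate N x"
  unfolding init_seg_def by (rule nth_equalityI) (simp_all add: padded_enumeration_def)

theorem proposition3p2:
  fixes F :: "nat \<Rightarrow> nat set" and A B :: "nat set"
  assumes "indexed_family F"
    and "in_family A F" and "in_family B F"
    and "A \<noteq> B" and "A \<inter> B \<noteq> {}"
  shows "\<not> PRT_learnable F"
proof
  assume "PRT_learnable F"
  then obtain M and p :: "nat poly" where learns: "\<And>C f. in_family C F \<Longrightarrow> enumeration f C
      \<Longrightarrow> converges_within F M f C (poly p (min_index F C))"
    unfolding PRT_learnable_def by blast
  obtain x where "x \<in> A" "x \<in> B" using assms(5) by blast
  define N where "N = poly p (min_index F A) + poly p (min_index F B)"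
  have "converges_within F M (padded_enumeration x N A) A (poly p (min_index F A))"
    using learns assms(2) enumeration_padded_enumeration[OF \<open>x \<in> A\<close>] by blast
  moreover have "converges_within F M (padded_enumeration x N B) B (poly p (min_index F B))"
    using learns assms(3) enumeration_padded_enumeration[OF \<open>x \<in> B\<close>] by blast
  ultimately have "A = B"
    by (rule converges_within_common_prefix[where N = N])
      (simp_all add: init_seg_padded_enumeration N_def)
  with assms(4) show False ..
qed

end
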